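(* Let $(\mathfrak{g},[\cdot,\ldots,\cdot],\varepsilon,\alpha)$ be an $n$-Hom-Lie color algebra with $n\geq3$ and let $\mathcal{N}$ be a bijective Nijenhuis operator on it. Let $a\in\mathfrak{g}_0$ with $\alpha(a)=a$ and $\mathcal{N}(a)\in Z(\mathfrak{g})$. Then $\mathcal{N}$ is a Nijenhuis operator on the $(n-1)$-Hom-Lie color algebra $(\mathfrak{g},\{\cdot,\ldots,\cdot\},\varepsilon,\alpha)$, where $\{x_1,\ldots,x_{n-1}\}=[a,x_1,\ldots,x_{n-1}]$.
   Context: $\mathbb{K}$ is a field of characteristic zero and $\Gamma$ an abelian group; $\mathfrak{g}_0$ is the degree-$0$ component. A bicharacter is a map $\varepsilon:\Gamma\times\Gamma\to\mathbb{K}\setminus\{0\}$ with $\varepsilon(a,b)\varepsilon(b,a)=1$, $\varepsilon(a,b+c)=\varepsilon(a,b)\varepsilon(a,c)$, $\varepsilon(a+b,c)=\varepsilon(a,c)\varepsilon(b,c)$. For homogeneous $x,y$, $\varepsilon(x,y)=\varepsilon(|x|,|y|)$ and $\varepsilon(x,y_1+\dots+y_k)=\varepsilon(|x|,|y_1|+\dots+|y_k|)$ ($=1$ for an empty sum). An $m$-Hom-Lie color algebra $(\mathfrak{g},[\cdot,\ldots,\cdot],\varepsilon,\alpha)$ is a $\Gamma$-graded vector space with an $m$-linear bracket of degree zero, a bicharacter $\varepsilon$ and a degree-zero linear map $\alpha$ such that for homogeneous elements: (i) $[x_1,\ldots,x_i,x_{i+1},\ldots,x_m]=-\varepsilon(x_i,x_{i+1})[x_1,\ldots,x_{i+1},x_i,\ldots,x_m]$;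 (ii) $[\alpha(x_1),\ldots,\alpha(x_{m-1}),[y_1,\ldots,y_m]]=\sum_{i=1}^m\varepsilon(x_1+\dots+x_{m-1},y_1+\dots+y_{i-1})[\alpha(y_1),\ldots,\alpha(y_{i-1}),[x_1,\ldots,x_{m-1},y_i],\alpha(y_{i+1}),\ldots,\alpha(y_m)]$. The center is $Z(\mathfrak{g})=\{x:[x,y_1,\ldots,y_{m-1}]=0\ \forall y_i\}$. For an $m$-ary bracket and a degree-zero linear $\mathcal{N}$, set $[\cdot]^0_{\mathcal{N}}=[\cdot]$ and $[x_1,\ldots,x_m]^j_{\mathcal{N}}=\sum_{i_1<\dots<i_j}[x_1,\ldots,\mathcal{N}x_{i_1},\ldots,\mathcal{N}x_{i_j},\ldots,x_m]-\mathcal{N}([x_1,\ldots,x_m]^{j-1}_{\mathcal{N}})$ for $1\le j\le m-1$ ($\mathcal{N}$ applied exactly at positions $i_1,\ldots,i_j$). $\mathcal{N}$ is a Nijenhuis operator on the $m$-ary algebra if $\mathcal{N}\circ\alpha=\alpha\circ\mathcal{N}$ and $[\mathcal{N}x_1,\ldots,\mathcal{N}x_m]=\mathcal{N}([x_1,\ldots,x_m]^{m-1}_{\mathcal{N}})$. *)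

theory Defs
  imports Complex_Main
begin

text \<open>A \<Gamma>-graded vector space over a field 'k (characteristic zero is imposed in the
  theorem) with carrier type 'v, scalar multiplication scale, and homogeneous
  components V g (g in the abelian group 'g).  Degrees are carried explicitly:
  an element x is homogeneous of degree g iff x \<in> V g.\<close>

definition graded_space ::
  "('k::field \<Rightarrow> 'v::ab_group_add \<Rightarrow> 'v) \<Rightarrow> ('g::ab_group_add \<Rightarrow> 'v set) \<Rightarrow> bool" where
  "graded_space scale V \<longleftrightarrow>
     vector_space scale \<and>
     (\<forall>g. 0 \<in> V g \<and> (\<forall>x\<in>V g. \<forall>y\<in>V g. x + y \<in> V g) \<and> (\<forall>c. \<forall>x\<in>V g. scale c x \<in> V g)) \<and>
     (\<forall>x. \<exists>!f. finite {g. f g \<noteq> 0} \<and> (\<forall>g. f g \<in> V g) \<and> x = sum f {g. f g \<noteq> 0})"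

definition bicharacter :: "('g::ab_group_add \<Rightarrow> 'g \<Rightarrow> 'k::field) \<Rightarrow> bool" where
  "bicharacter eps \<longleftrightarrow>
     (\<forall>a b. eps a b \<noteq> 0) \<and>
     (\<forall>a b. eps a b * eps b a = 1) \<and>
     (\<forall>a b c. eps a (b + c) = eps a b * eps a c) \<and>
     (\<forall>a b c. eps (a + b) c = eps a c * eps b c)"

definition homog :: "('g \<Rightarrow> 'v set) \<Rightarrow> 'v list \<Rightarrow> 'g list \<Rightarrow> bool" where
  "homog V xs ds \<longleftrightarrow> list_all2 (\<lambda>x d. x \<in> V d) xs ds"

definition degree_zero_map :: "('g \<Rightarrow> 'v set) \<Rightarrow> ('v \<Rightarrow> 'v) \<Rightarrow> bool" where
  "degree_zero_map V f \<longleftrightarrow> (\<forall>g x. x \<in> V g \<longrightarrow> f x \<in> V g)"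

text \<open>An m-ary bracket is a function on lists; only its values on lists of
  length m matter.  Multilinear and of degree zero.\<close>
definition multilinear_bracket ::
  "('k::field \<Rightarrow> 'v::ab_group_add \<Rightarrow> 'v) \<Rightarrow> ('g::ab_group_add \<Rightarrow> 'v set) \<Rightarrow> nat \<Rightarrow> ('v list \<Rightarrow> 'v) \<Rightarrow> bool" where
  "multilinear_bracket scale V m br \<longleftrightarrow>
     (\<forall>xs i. length xs = m \<longrightarrow> i < m \<longrightarrow> Vector_Spaces.linear scale scale (\<lambda>y. br (xs[i := y]))) \<and>
     (\<forall>xs ds. length xs = m \<longrightarrow> homog V xs ds \<longrightarrow> br xs \<in> V (sum_list ds))"

definition hom_lie_color ::
  "('k::field \<Rightarrow> 'v::ab_group_add \<Rightarrow> 'v) \<Rightarrow> ('g::ab_group_add \<Rightarrow> 'v set) \<Rightarrow> nat \<Rightarrow>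
   ('v list \<Rightarrow> 'v) \<Rightarrow> ('g \<Rightarrow> 'g \<Rightarrow> 'k) \<Rightarrow> ('v \<Rightarrow> 'v) \<Rightarrow> bool" where
  "hom_lie_color scale V m br eps alpha \<longleftrightarrow>
     graded_space scale V \<and> bicharacter eps \<and>
     multilinear_bracket scale V m br \<and>
     Vector_Spaces.linear scale scale alpha \<and> degree_zero_map V alpha \<and>
     \<comment> \<open>(i) color skew-symmetry in adjacent arguments\<close>
     (\<forall>xs ds i. length xs = m \<longrightarrow> homog V xs ds \<longrightarrow> Suc i < m \<longrightarrow>
        br xs = - scale (eps (ds ! i) (ds ! Suc i)) (br (xs[i := xs ! Suc i, Suc i := xs ! i]))) \<and>
     \<comment> \<open>(ii) Hom-Jacobi (fundamental) identity\<close>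
     (\<forall>xs as ys bs. length xs = m - 1 \<longrightarrow> length ys = m \<longrightarrow> homog V xs as \<longrightarrow> homog V ys bs \<longrightarrow>
        br (map alpha xs @ [br ys]) =
        (\<Sum>i<m. scale (eps (sum_list as) (sum_list (take i bs)))
                 (br (map alpha (take i ys) @ [br (xs @ [ys ! i])] @ map alpha (drop (Suc i) ys)))))"

definition center :: "nat \<Rightarrow> ('v list \<Rightarrow> 'v::zero) \<Rightarrow> 'v set" where
  "center m br = {x. \<forall>ys. length ys = m - 1 \<longrightarrow> br (x # ys) = 0}"

definition apply_at :: "('v \<Rightarrow> 'v) \<Rightarrow> nat set \<Rightarrow> 'v list \<Rightarrow> 'v list" where
  "apply_at N S xs = map (\<lambda>i. if i \<in> S then N (xs ! i) else xs ! i) [0..<length xs]"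

fun brN :: "('v list \<Rightarrow> 'v::ab_group_add) \<Rightarrow> ('v \<Rightarrow> 'v) \<Rightarrow> nat \<Rightarrow> 'v list \<Rightarrow> 'v" where
  "brN br N 0 xs = br xs"
| "brN br N (Suc j) xs =
     (\<Sum>S\<in>{S. S \<subseteq> {..<length xs} \<and> card S = Suc j}. br (apply_at N S xs)) - N (brN br N j xs)"

definition nijenhuis ::
  "('k::field \<Rightarrow> 'v::ab_group_add \<Rightarrow> 'v) \<Rightarrow> ('g::ab_group_add \<Rightarrow> 'v set) \<Rightarrow> nat \<Rightarrow>
   ('v list \<Rightarrow> 'v) \<Rightarrow> ('v \<Rightarrow> 'v) \<Rightarrow> ('v \<Rightarrow> 'v) \<Rightarrow> bool" where
  "nijenhuis scale V m br alpha N \<longleftrightarrow>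
     Vector_Spaces.linear scale scale N \<and> degree_zero_map V N \<and>
     N \<circ> alpha = alpha \<circ> N \<and>
     (\<forall>xs. length xs = m \<longrightarrow> br (map N xs) = N (brN br N (m - 1) xs))"

end

theory Submission
  imports Defs
begin

text \<open>Contracting with a degree-zero element \<open>a\<close> fixed by \<open>\<alpha>\<close> keeps multilinearity and
  color skew-symmetry for free.  In the Hom-Jacobi identity for \<open>a # xs\<close> and \<open>a # ys\<close> the
  only summand not of the contracted shape contains \<open>[a, xs, a]\<close>, and a bracket with a
  repeated degree-zero argument is its own negative, hence zero in characteristic zero.
  For the Nijenhuis identity, centrality of \<open>N a\<close> kills every summand of the deformed
  bracket \<open>[a, xs]\<^sup>j\<^sub>N\<close> in which \<open>N\<close> hits \<open>a\<close>, so it is the deformed bracket of the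
  contraction.  The \<open>n\<close>-ary Nijenhuis identity at \<open>a # xs\<close> gives
  \<open>N [a, xs]\<^sup>n\<^sup>-\<^sup>1\<^sub>N = [N a, N xs] = 0\<close>, and by injectivity of \<open>N\<close> this top deformation
  vanishes, which is exactly the Nijenhuis identity of the contraction.\<close>

lemma vector_space_add_self_eq_0:
  fixes scale :: "'k::field_char_0 \<Rightarrow> 'v::ab_group_add \<Rightarrow> 'v" and x :: 'v
  assumes "vector_space scale" and "x + x = 0"
  shows "x = 0"
proof -
  interpret vector_space scale by fact
  have "scale 2 x = x + x"
    using scale_left_distrib[of 1 1 x] by simp
  then show ?thesis
    using assms(2) by simp
qed

lemma bicharacter_zero_right:
  assumes "bicharacter eps"
  shows "eps d 0 = 1"
proof -
  have "eps d (0 + 0) = eps d 0 * eps d 0" and "eps d 0 \<noteq> 0"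
    using assms unfolding bicharacter_def by blast+
  then show ?thesis
    by simp
qed

lemma homog_length: "homog V xs ds \<Longrightarrow> length ds = length xs"
  unfolding homog_def by (simp add: list_all2_lengthD)

lemma homog_nth: "homog V xs ds \<Longrightarrow> i < length xs \<Longrightarrow> xs ! i \<in> V (ds ! i)"
  unfolding homog_def by (simp add: list_all2_conv_all_nth)

lemma homog_update: "homog V xs ds \<Longrightarrow> x \<in> V d \<Longrightarrow> homog V (xs[i := x]) (ds[i := d])"
  unfolding homog_def by (simp add: list_all2_update_cong)

lemma homog_Cons [simp]: "homog V (x # xs) (d # ds) \<longleftrightarrow> x \<in> V d \<and> homog V xs ds"
  unfolding homog_def by simp

lemma homog_snoc: "homog V xs ds \<Longrightarrow> x \<in> V d \<Longrightarrow> homog V (xs @ [x]) (ds @ [d])"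
  unfolding homog_def by (simp add: list_all2_appendI)

lemma hom_lie_color_skew:
  assumes "hom_lie_color scale V m br eps alpha"
    and "length xs = m" "homog V xs ds" "Suc i < m"
  shows "br xs = - scale (eps (ds ! i) (ds ! Suc i)) (br (xs[i := xs ! Suc i, Suc i := xs ! i]))"
  using assms unfolding hom_lie_color_def by blast

lemma hom_lie_color_swap_degree_zero:
  assumes "hom_lie_color scale V m br eps alpha"
    and "length xs = m" "homog V xs ds" "Suc i < m" "ds ! Suc i = 0"
  shows "br xs = - br (xs[i := xs ! Suc i, Suc i := xs ! i])"
proof -
  have "vector_space scale" "bicharacter eps"
    using assms(1) unfolding hom_lie_color_def graded_space_def by blast+
  with hom_lie_color_skew[OF assms(1-4)] show ?thesis
    using assms(5) by (simp add: bicharacter_zero_right module.scale_one module_iff_vector_space)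
qed

lemma hom_lie_color_jacobi:
  assumes "hom_lie_color scale V m br eps alpha"
    and "length xs = m - 1" "length ys = m" "homog V xs as" "homog V ys bs"
  shows "br (map alpha xs @ [br ys]) =
    (\<Sum>i<m. scale (eps (sum_list as) (sum_list (take i bs)))
       (br (map alpha (take i ys) @ [br (xs @ [ys ! i])] @ map alpha (drop (Suc i) ys))))"
  using assms unfolding hom_lie_color_def by blast

text \<open>The repeated argument is moved next to its twin by adjacent transpositions, each
  of which only changes the sign because the moving entry has degree zero.\<close>

lemma hom_lie_color_repeated_arg_eq_0:
  fixes scale :: "'k::field_char_0 \<Rightarrow> 'v::ab_group_add \<Rightarrow> 'v"
  assumes hlc: "hom_lie_color scale V m br eps alpha"
  shows "length xs = m \<Longrightarrow> homog V xs ds \<Longrightarrow> i < j \<Longrightarrow> j < m \<Longrightarrow> xs ! i = xs ! j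
    \<Longrightarrow> ds ! j = 0 \<Longrightarrow> br xs = 0"
proof (induction j arbitrary: xs ds)
  case 0
  then show ?case by simp
next
  case (Suc j)
  let ?xs' = "xs[j := xs ! Suc j, Suc j := xs ! j]"
  have swap: "br xs = - br ?xs'"
    using hom_lie_color_swap_degree_zero[OF hlc] Suc.prems by blast
  show ?case
  proof (cases "j = i")
    case True
    then have "?xs' = xs"
      using Suc.prems by (metis list_update_id)
    then have "br xs + br xs = 0"
      using swap by (metis add.right_inverse)
    moreover have "vector_space scale"
      using hlc unfolding hom_lie_color_def graded_space_def by blast
    ultimately show ?thesis
      using vector_space_add_self_eq_0 by blast
  next
    case False
    let ?ds' = "ds[j := ds ! Suc j, Suc j := ds ! j]"
    have "length ds = m"
      using homog_length[OF Suc.prems(2)] Suc.prems(1) by simp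
    moreover have "homog V ?xs' ?ds'"
      using Suc.prems by (intro homog_update homog_nth) auto
    ultimately have "br ?xs' = 0"
      using Suc.prems False by (intro Suc.IH) auto
    then show ?thesis
      using swap by simp
  qed
qed

lemma multilinear_bracket_contract:
  fixes br :: "'v::ab_group_add list \<Rightarrow> 'v"
  assumes "multilinear_bracket scale V (Suc m) br" and "a \<in> V 0"
  shows "multilinear_bracket scale V m (\<lambda>xs. br (a # xs))"
  unfolding multilinear_bracket_def
proof (intro conjI allI impI)
  fix xs :: "'v list" and i
  assume "length xs = m" "i < m"
  then have "Vector_Spaces.linear scale scale (\<lambda>y. br ((a # xs)[Suc i := y]))"
    using assms(1) unfolding multilinear_bracket_def by (metis Suc_mono length_Cons)
  then show "Vector_Spaces.linear scale scale (\<lambda>y. br (a # xs[i := y]))"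
    by simp
next
  fix xs :: "'v list" and ds
  assume "length xs = m" "homog V xs ds"
  then show "br (a # xs) \<in> V (sum_list ds)"
    using assms unfolding multilinear_bracket_def by (metis homog_Cons length_Cons sum_list.Cons add_0)
qed

lemma hom_lie_color_contract_jacobi:
  fixes scale :: "'k::field_char_0 \<Rightarrow> 'v::ab_group_add \<Rightarrow> 'v"
  assumes hlc: "hom_lie_color scale V (Suc (Suc m)) br eps alpha"
    and a: "a \<in> V 0" "alpha a = a"
    and xs: "length xs = m" "homog V xs as"
    and ys: "length ys = Suc m" "homog V ys bs"
  shows "br (a # map alpha xs @ [br (a # ys)]) =
    (\<Sum>i<Suc m. scale (eps (sum_list as) (sum_list (take i bs)))
       (br (a # map alpha (take i ys) @ [br (a # xs @ [ys ! i])] @ map alpha (drop (Suc i) ys))))"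
proof -
  have vs: "vector_space scale" and lin: "multilinear_bracket scale V (Suc (Suc m)) br"
    using hlc unfolding hom_lie_color_def graded_space_def by blast+
  have "br (a # xs @ [a]) = 0"
  proof (rule hom_lie_color_repeated_arg_eq_0[OF hlc])
    show "homog V (a # xs @ [a]) (0 # as @ [0])"
      using xs a by (simp add: homog_snoc)
    show "(0 # as @ [0]) ! Suc m = 0"
      using homog_length[OF xs(2)] xs(1) by (simp add: nth_append)
  qed (use xs in \<open>auto simp: nth_append\<close>)
  moreover have "br (0 # map alpha ys) = 0"
    using lin ys(1) unfolding multilinear_bracket_def
    by (metis (no_types, lifting) Vector_Spaces.linear_iff_module_hom module_hom.zero
        length_Cons length_map list_update_code(2) zero_less_Suc)
  moreover have "br (map alpha (a # xs) @ [br (a # ys)]) =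
    (\<Sum>i<Suc (Suc m). scale (eps (sum_list (0 # as)) (sum_list (take i (0 # bs))))
       (br (map alpha (take i (a # ys)) @ [br ((a # xs) @ [(a # ys) ! i])] @
            map alpha (drop (Suc i) (a # ys)))))"
    by (rule hom_lie_color_jacobi[OF hlc]) (use xs ys a(1) in simp_all)
  ultimately show ?thesis
    using a(2) vs unfolding sum.lessThan_Suc_shift
    by (simp add: module.scale_zero_right module_iff_vector_space)
qed

lemma hom_lie_color_contract:
  fixes scale :: "'k::field_char_0 \<Rightarrow> 'v::ab_group_add \<Rightarrow> 'v"
  assumes hlc: "hom_lie_color scale V n br eps alpha" and "2 \<le> n"
    and a: "a \<in> V 0" "alpha a = a"
  shows "hom_lie_color scale V (n - 1) (\<lambda>xs. br (a # xs)) eps alpha"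
proof -
  obtain m where n: "n = Suc (Suc m)"
    using \<open>2 \<le> n\<close> by (metis add_2_eq_Suc le_Suc_ex)
  show ?thesis
    unfolding hom_lie_color_def
  proof (intro conjI allI impI)
    show "graded_space scale V" "bicharacter eps" "Vector_Spaces.linear scale scale alpha"
      "degree_zero_map V alpha"
      using hlc unfolding hom_lie_color_def by blast+
    show "multilinear_bracket scale V (n - 1) (\<lambda>xs. br (a # xs))"
      using hlc a(1) n unfolding hom_lie_color_def by (simp add: multilinear_bracket_contract)
  next
    fix xs :: "'v list" and ds i
    assume "length xs = n - 1" "homog V xs ds" "Suc i < n - 1"
    then show "br (a # xs) = - scale (eps (ds ! i) (ds ! Suc i)) (br (a # xs[i := xs ! Suc i, Suc i := xs ! i]))"
      using hom_lie_color_skew[OF hlc, of "a # xs" "0 # ds" "Suc i"] a(1) n by simp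
  next
    fix xs :: "'v list" and as ys bs
    assume "length xs = n - 1 - 1" "length ys = n - 1" "homog V xs as" "homog V ys bs"
    then show "br (a # map alpha xs @ [br (a # ys)]) =
      (\<Sum>i<n - 1. scale (eps (sum_list as) (sum_list (take i bs)))
         (br (a # map alpha (take i ys) @ [br (a # xs @ [ys ! i])] @ map alpha (drop (Suc i) ys))))"
      using hom_lie_color_contract_jacobi[of scale V m br eps alpha a xs as ys bs] hlc a n
      by simp
  qed
qed

lemma length_apply_at [simp]: "length (apply_at N S xs) = length xs"
  unfolding apply_at_def by simp

lemma apply_at_Cons:
  "apply_at N S (x # xs) = (if 0 \<in> S then N x else x) # apply_at N {i. Suc i \<in> S} xs"
  unfolding apply_at_def by (simp add: map_upt_Suc del: upt_Suc)

lemma apply_at_lessThan_length: "apply_at N {..<length xs} xs = map N xs"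
  unfolding apply_at_def by (rule nth_equalityI) auto

lemma subsets_without_0_eq_image_Suc:
  "{S. S \<subseteq> {..<Suc L} \<and> card S = k \<and> 0 \<notin> S} = (\<lambda>S. Suc ` S) ` {S. S \<subseteq> {..<L} \<and> card S = k}"
proof (intro equalityI subsetI)
  fix S
  assume S: "S \<in> {S. S \<subseteq> {..<Suc L} \<and> card S = k \<and> 0 \<notin> S}"
  then have S_eq: "S = Suc ` {i. Suc i \<in> S}"
    by (auto simp: image_iff) (metis not0_implies_Suc)
  have "card {i. Suc i \<in> S} = card S"
    by (subst (2) S_eq) (simp add: card_image)
  then show "S \<in> (\<lambda>S. Suc ` S) ` {S. S \<subseteq> {..<L} \<and> card S = k}"
    using S by (intro image_eqI[where f = "\<lambda>S. Suc ` S", OF S_eq]) auto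
qed (auto simp: card_image)

lemma brN_length:
  "length xs = Suc j \<Longrightarrow> brN br N (Suc j) xs = br (map N xs) - N (brN br N j xs)"
proof -
  assume xs: "length xs = Suc j"
  have "{S. S \<subseteq> {..<Suc j} \<and> card S = Suc j} = {{..<Suc j}}"
    using card_subset_eq[of "{..<Suc j}"] by auto
  then show ?thesis
    using apply_at_lessThan_length[of N xs] xs by simp
qed

text \<open>Every summand with \<open>0 \<in> S\<close> starts with the central element \<open>N a\<close>; the others
  correspond to the subsets of the positions of \<open>xs\<close>.\<close>

lemma brN_Cons_central:
  assumes central: "\<And>ys. length ys = length xs \<Longrightarrow> br (N a # ys) = 0"
  shows "brN br N j (a # xs) = brN (\<lambda>ys. br (a # ys)) N j xs"
proof (induction j)
  case 0
  then show ?case by simp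
next
  case (Suc j)
  let ?F = "{S. S \<subseteq> {..<Suc (length xs)} \<and> card S = Suc j}"
  have "finite ?F"
    by (rule finite_subset[of _ "Pow {..<Suc (length xs)}"]) auto
  then have "(\<Sum>S\<in>?F. br (apply_at N S (a # xs))) =
      (\<Sum>S\<in>{S. S \<subseteq> {..<Suc (length xs)} \<and> card S = Suc j \<and> 0 \<notin> S}. br (apply_at N S (a # xs)))"
    by (intro sum.mono_neutral_right) (auto simp: apply_at_Cons central)
  also have "\<dots> = (\<Sum>S\<in>{S. S \<subseteq> {..<length xs} \<and> card S = Suc j}. br (apply_at N (Suc ` S) (a # xs)))"
    unfolding subsets_without_0_eq_image_Suc
    by (subst sum.reindex) (auto simp: inj_on_def inj_image_eq_iff)
  also have "\<dots> = (\<Sum>S\<in>{S. S \<subseteq> {..<length xs} \<and> card S = Suc j}. br (a # apply_at N S xs))"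
    by (intro sum.cong) (simp_all add: apply_at_Cons image_iff)
  finally show ?case
    by (simp only: brN.simps Suc.IH length_Cons)
qed

lemma nijenhuis_contract:
  assumes nij: "nijenhuis scale V n br alpha N" and "inj N" and "2 \<le> n"
    and central: "N a \<in> center n br"
  shows "nijenhuis scale V (n - 1) (\<lambda>xs. br (a # xs)) alpha N"
proof -
  obtain m where n: "n = Suc (Suc m)"
    using \<open>2 \<le> n\<close> by (metis add_2_eq_Suc le_Suc_ex)
  have lin: "Vector_Spaces.linear scale scale N" and "degree_zero_map V N"
    and "N \<circ> alpha = alpha \<circ> N"
    and nij_identity: "\<And>xs. length xs = n \<Longrightarrow> br (map N xs) = N (brN br N (n - 1) xs)"
    using nij unfolding nijenhuis_def by blast+
  have "br (a # map N xs) = N (brN (\<lambda>ys. br (a # ys)) N m xs)" if xs: "length xs = Suc m" for xs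
  proof -
    have central_xs: "\<And>ys. length ys = length xs \<Longrightarrow> br (N a # ys) = 0"
      using central xs n unfolding center_def by simp
    have "N (brN br N (Suc m) (a # xs)) = br (map N (a # xs))"
      using nij_identity[of "a # xs"] xs n by (simp del: brN.simps)
    also have "\<dots> = 0"
      using central_xs[of "map N xs"] by simp
    also have "\<dots> = N 0"
      using lin by (simp add: Vector_Spaces.linear_iff_module_hom module_hom.zero)
    finally have "brN br N (Suc m) (a # xs) = 0"
      by (rule injD[OF \<open>inj N\<close>])
    then have "brN (\<lambda>ys. br (a # ys)) N (Suc m) xs = 0"
      by (simp only: brN_Cons_central[of xs br N a, OF central_xs])
    then show ?thesis
      by (simp del: brN.simps add: brN_length[OF xs])
  qed
  with lin \<open>degree_zero_map V N\<close> \<open>N \<circ> alpha = alpha \<circ> N\<close> show ?thesis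
    unfolding nijenhuis_def n by simp
qed

theorem proposition6p4:
  fixes scale :: "'k::field_char_0 \<Rightarrow> 'v::ab_group_add \<Rightarrow> 'v"
    and V :: "'g::ab_group_add \<Rightarrow> 'v set"
    and br :: "'v list \<Rightarrow> 'v" and eps :: "'g \<Rightarrow> 'g \<Rightarrow> 'k"
    and alpha N :: "'v \<Rightarrow> 'v" and n :: nat and a :: 'v
  assumes "hom_lie_color scale V n br eps alpha"
    and "n \<ge> 3"
    and "nijenhuis scale V n br alpha N"
    and "bij N"
    and "a \<in> V 0"
    and "alpha a = a"
    and "N a \<in> center n br"
  shows "hom_lie_color scale V (n - 1) (\<lambda>xs. br (a # xs)) eps alpha
       \<and> nijenhuis scale V (n - 1) (\<lambda>xs. br (a # xs)) alpha N"
  using hom_lie_color_contract[OF assms(1) _ assms(5,6)] nijenhuis_contract[OF assms(3) _ _ assms(7)]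
    assms(2,4) by (simp add: bij_is_inj)

end
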